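(* Let $f \in \mathrm{Inj}(\Omega)$ satisfy $(f)\mathrm{C}_{\mathrm{open}} + (f)\mathrm{C}_{\mathrm{fwd}} = 1$ and $(f)\mathrm{C}_n < \aleph_0$ for all $n \in \mathbb{Z}_+$, and let $h \in \mathrm{Alt}(\Omega)$. Then $fh \approx_{\mathrm{even}} f \approx_{\mathrm{even}} hf$.
   Context: $\Omega$ is a countably infinite set; maps are written on the right and composed left to right. $\mathrm{Inj}(\Omega)$ is the monoid of injective maps $\Omega\to\Omega$; $\mathrm{Alt}(\Omega)$ the group of even permutations moving only finitely many points. For $f\in\mathrm{Inj}(\Omega)$, a cycle of $f$ is a nonempty $\Sigma\subseteq\Omega$ such that (a) for all $\alpha\in\Omega$, $(\alpha)f\in\Sigma$ iff $\alpha\in\Sigma$, and (b) no proper nonempty subset of $\Sigma$ satisfies (a). A forward cycle is an infinite cycle $\Sigma$ with $\Sigma\setminus(\Omega)f\ne\emptyset$; an open cycle is an infinite cycle that is not forward. $(f)\mathrm{C}_n$ ($n\in\mathbb{Z}_+$) is the cardinal number of cycles of cardinality $n$; $(f)\mathrm{C}_{\mathrm{open}}$, $(f)\mathrm{C}_{\mathrm{fwd}}$ the numbers of open and forward cycles. $f\approx_{\mathrm{fin}}g$ means: $(f)\mathrm{C}_{\mathrm{open}}=(g)\mathrm{C}_{\mathrm{open}}$; $(f)\mathrm{C}_{\mathrm{fwd}}=(g)\mathrm{C}_{\mathrm{fwd}}$; $(f)\mathrm{C}_n\ne(g)\mathrm{C}_n$ for only finitely many $n$; and whenever $(f)\mathrm{C}_n\ne(g)\mathrm{C}_n$,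 both are finite. $f\approx_{\mathrm{even}} g$ means $f\approx_{\mathrm{fin}}g$ and $\sum_{n\in\mathbb{Z}_+}((f)\mathrm{C}_n-(g)\mathrm{C}_n)$ is an even integer, where a term is $0$ whenever $(f)\mathrm{C}_n=(g)\mathrm{C}_n$ (even if infinite). *)

theory Defs
  imports Main "HOL-Library.Extended_Nat" "HOL-Library.Countable_Set" "HOL-Combinatorics.Permutations"
begin

text \<open>Omega is modelled as the universe of a type 'a (countably infinite by assumption).
Maps written on the right and composed left to right: the product f h (first f, then h)
is the HOL function h \<circ> f.\<close>

text \<open>Cardinal of a set of cycles (at most countably many cycles occur): finite card or infinity.\<close>
definition ecard :: "'b set \<Rightarrow> enat" where
  "ecard S = (if finite S then enat (card S) else \<infinity>)"

definition inv_closed :: "('a \<Rightarrow> 'a) \<Rightarrow> 'a set \<Rightarrow> bool" where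
  "inv_closed f S \<longleftrightarrow> (\<forall>a. f a \<in> S \<longleftrightarrow> a \<in> S)"

definition is_cycle :: "('a \<Rightarrow> 'a) \<Rightarrow> 'a set \<Rightarrow> bool" where
  "is_cycle f S \<longleftrightarrow> S \<noteq> {} \<and> inv_closed f S \<and>
     (\<forall>T. T \<subset> S \<and> T \<noteq> {} \<longrightarrow> \<not> inv_closed f T)"

definition fwd_cycle :: "('a \<Rightarrow> 'a) \<Rightarrow> 'a set \<Rightarrow> bool" where
  "fwd_cycle f S \<longleftrightarrow> is_cycle f S \<and> infinite S \<and> S - range f \<noteq> {}"

definition open_cycle :: "('a \<Rightarrow> 'a) \<Rightarrow> 'a set \<Rightarrow> bool" where
  "open_cycle f S \<longleftrightarrow> is_cycle f S \<and> infinite S \<and> \<not> (S - range f \<noteq> {})"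

definition Cn :: "('a \<Rightarrow> 'a) \<Rightarrow> nat \<Rightarrow> enat" where
  "Cn f n = ecard {S. is_cycle f S \<and> finite S \<and> card S = n}"

definition Copen :: "('a \<Rightarrow> 'a) \<Rightarrow> enat" where
  "Copen f = ecard {S. open_cycle f S}"

definition Cfwd :: "('a \<Rightarrow> 'a) \<Rightarrow> enat" where
  "Cfwd f = ecard {S. fwd_cycle f S}"

definition approx_fin :: "('a \<Rightarrow> 'a) \<Rightarrow> ('a \<Rightarrow> 'a) \<Rightarrow> bool" where
  "approx_fin f g \<longleftrightarrow> Copen f = Copen g \<and> Cfwd f = Cfwd g \<and>
     finite {n. n > 0 \<and> Cn f n \<noteq> Cn g n} \<and>
     (\<forall>n>0. Cn f n \<noteq> Cn g n \<longrightarrow> Cn f n \<noteq> \<infinity> \<and> Cn g n \<noteq> \<infinity>)"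

definition approx_even :: "('a \<Rightarrow> 'a) \<Rightarrow> ('a \<Rightarrow> 'a) \<Rightarrow> bool" where
  "approx_even f g \<longleftrightarrow> approx_fin f g \<and>
     even (\<Sum>n\<in>{n. n > 0 \<and> Cn f n \<noteq> Cn g n}.
             int (the_enat (Cn f n)) - int (the_enat (Cn g n)))"

end

theory Submission
  imports Defs
begin

(*
  An even permutation h is a
  product of an even number of transpositions, so the heart of the proof is the effect of
  one transposition: g' = transpose a b \<circ> g for an injective g.
  - Cycles of g are the connected components of its functional graph.  Cycles avoiding a
    and b are the same for g and g', and forward cycles correspond to the points outside
    the range, so their number is unchanged.
  - If a and b lie in one cycle of g, it splits into two cycles of g', at least one of them
    finite; if they lie in different cycles, one of them finite, g' merges the two.
  - Hence, when g has a single infinite cycle, the infinite cycles are preserved and the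
    counts of finite cycles change at finitely many lengths by an odd signed total.
  Induction along a sequence of m transpositions gives h \<circ> f \<approx>even f when m is even.
  For the other side, f \<circ> transpose a b = transpose (f a) (f b) \<circ> f for injective f, so
  f \<circ> h = h' \<circ> f with h' again a product of m transpositions.
*)

section \<open>Cycles as connected components\<close>

text \<open>Two points are linked if their forward orbits meet; the linked class of x is the cycle
  of x.\<close>

definition linked :: "('a \<Rightarrow> 'a) \<Rightarrow> 'a \<Rightarrow> 'a \<Rightarrow> bool" where
  "linked g x y \<longleftrightarrow> (\<exists>m n. (g^^m) x = (g^^n) y)"

definition component :: "('a \<Rightarrow> 'a) \<Rightarrow> 'a \<Rightarrow> 'a set" where
  "component g x = {y. linked g x y}"

lemma funpow_add_apply:
  fixes g :: "'a \<Rightarrow> 'a"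
  shows "(g^^(m + n)) x = (g^^m) ((g^^n) x)"
  by (simp add: funpow_add)

lemma linked_refl: "linked g x x"
  unfolding linked_def by blast

lemma linked_sym: "linked g x y \<Longrightarrow> linked g y x"
  unfolding linked_def by metis

lemma linked_trans:
  assumes "linked g x y" "linked g y z"
  shows "linked g x z"
proof -
  obtain m n p q where xy: "(g^^m) x = (g^^n) y" and yz: "(g^^p) y = (g^^q) z"
    using assms unfolding linked_def by blast
  have "(g^^(p + m)) x = (g^^(p + n)) y"
    using xy by (simp add: funpow_add_apply)
  also have "\<dots> = (g^^(n + p)) y" by (simp add: add.commute)
  also have "\<dots> = (g^^(n + q)) z"
    using yz by (simp add: funpow_add_apply)
  finally show ?thesis unfolding linked_def by blast
qed

lemma linked_funpow: "linked g x ((g^^k) x)"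
  unfolding linked_def by (intro exI[of _ k] exI[of _ 0]) simp

lemma component_self: "x \<in> component g x"
  unfolding component_def by (simp add: linked_refl)

lemma component_eq_iff: "component g x = component g y \<longleftrightarrow> linked g x y"
proof
  assume "component g x = component g y"
  then show "linked g x y"
    using component_self[of y g] unfolding component_def by blast
next
  assume xy: "linked g x y"
  have "linked g x z \<longleftrightarrow> linked g y z" for z
    using linked_trans[OF xy] linked_trans[OF linked_sym[OF xy]] by blast
  then show "component g x = component g y"
    unfolding component_def by blast
qed

lemma inv_closed_funpow:
  assumes "inv_closed g T"
  shows "(g^^n) y \<in> T \<longleftrightarrow> y \<in> T"
proof (induction n arbitrary: y)
  case (Suc n)
  then show ?case
    using assms unfolding inv_closed_def by (simp add: funpow_swap1)
qed simp

lemma inv_closed_component: "inv_closed g (component g x)"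
  unfolding inv_closed_def component_def linked_def mem_Collect_eq
proof (intro allI iffI)
  fix a
  assume "\<exists>m n. (g^^m) x = (g^^n) (g a)"
  then obtain m n where "(g^^m) x = (g^^n) (g a)" by blast
  then have "(g^^m) x = (g^^Suc n) a" by (simp add: funpow_swap1)
  then show "\<exists>m n. (g^^m) x = (g^^n) a" by blast
next
  fix a
  assume "\<exists>m n. (g^^m) x = (g^^n) a"
  then obtain m n where "(g^^m) x = (g^^n) a" by blast
  then have "(g^^Suc m) x = (g^^n) (g a)" by (simp add: funpow_swap1)
  then show "\<exists>m n. (g^^m) x = (g^^n) (g a)" by blast
qed

lemma component_subset:
  assumes "inv_closed g T" "x \<in> T"
  shows "component g x \<subseteq> T"
proof
  fix y
  assume "y \<in> component g x"
  then obtain m n where "(g^^m) x = (g^^n) y"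
    unfolding component_def linked_def by blast
  then show "y \<in> T"
    using assms inv_closed_funpow[OF assms(1)] by metis
qed

lemma is_cycle_component: "is_cycle g (component g x)"
  unfolding is_cycle_def
proof (intro conjI allI impI)
  show "component g x \<noteq> {}" using component_self by fast
  show "inv_closed g (component g x)" by (rule inv_closed_component)
  fix T
  assume T: "T \<subset> component g x \<and> T \<noteq> {}"
  show "\<not> inv_closed g T"
  proof
    assume closed: "inv_closed g T"
    obtain y where y: "y \<in> T" using T by fast
    have "linked g x y" using y T unfolding component_def by blast
    then have "component g x = component g y" by (simp add: component_eq_iff)
    then have "component g x \<subseteq> T" using component_subset[OF closed y] by simp
    then show False using T by blast
  qed
qed

lemma cycle_eq_component:
  assumes "is_cycle g S" "x \<in> S"
  shows "S = component g x"
proof (rule ccontr)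
  have closed: "inv_closed g S" and minimal: "\<And>T. T \<subset> S \<Longrightarrow> T \<noteq> {} \<Longrightarrow> \<not> inv_closed g T"
    using assms(1) unfolding is_cycle_def by blast+
  assume "S \<noteq> component g x"
  then have "component g x \<subset> S" using component_subset[OF closed assms(2)] by (simp add: psubset_eq)
  moreover have "component g x \<noteq> {}" using component_self by fast
  ultimately have "\<not> inv_closed g (component g x)" by (rule minimal)
  then show False using inv_closed_component[of g x] by simp
qed

lemma funpow_cancel:
  fixes g :: "'a \<Rightarrow> 'a"
  assumes "inj g" "(g^^i) u = (g^^i) v"
  shows "u = v"
  using injD[OF inj_fn[OF assms(1)] assms(2)] .

lemma linked_inj:
  assumes "inj g" "linked g a b"
  shows "\<exists>k. (g^^k) a = b \<or> (g^^k) b = a"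
proof -
  note cancel = funpow_cancel[OF assms(1)]
  obtain m n where e: "(g^^m) a = (g^^n) b" using assms(2) unfolding linked_def by blast
  show ?thesis
  proof (cases "m \<le> n")
    case True
    then have "(g^^m) a = (g^^m) ((g^^(n - m)) b)"
      using e funpow_add_apply[where m = m and n = "n - m" and x = b] by simp
    then have "a = (g^^(n - m)) b" by (rule cancel)
    then show ?thesis by blast
  next
    case False
    then have "(g^^n) ((g^^(m - n)) a) = (g^^n) b"
      using e funpow_add_apply[where m = n and n = "m - n" and x = a] by simp
    then have "(g^^(m - n)) a = b" by (rule cancel)
    then show ?thesis by blast
  qed
qed

lemma periodic_component:
  assumes "inj g" "0 < n" "(g^^n) x = x"
  shows "component g x = (\<lambda>i. (g^^i) x) ` {..<n}"
proof
  show "(\<lambda>i. (g^^i) x) ` {..<n} \<subseteq> component g x"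
    unfolding component_def by (auto simp: linked_funpow)
  show "component g x \<subseteq> (\<lambda>i. (g^^i) x) ` {..<n}"
  proof
    fix y
    assume "y \<in> component g x"
    then obtain k where k: "(g^^k) x = y \<or> (g^^k) y = x"
      using linked_inj[OF assms(1)] unfolding component_def by blast
    have period: "(g^^(n * i)) x = x" for i
      using assms(3) by (induction i) (simp_all add: funpow_add_apply)
    have "\<exists>j. (g^^j) x = y"
    proof (cases "(g^^k) x = y")
      case False
      then have ky: "(g^^k) y = x" using k by blast
      have "(g^^k) ((g^^(n * k - k)) x) = (g^^(n * k)) x"
        using assms(2) funpow_add_apply[where m = k and n = "n * k - k" and x = x] by simp
      also have "\<dots> = (g^^k) y" using period ky by simp
      finally show ?thesis using funpow_cancel[OF assms(1)] by blast
    qed blast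
    then obtain j where "(g^^j) x = y" by blast
    then have "(g^^(j mod n)) x = y" using funpow_mod_eq[OF assms(3)] by simp
    moreover have "j mod n \<in> {..<n}" using assms(2) by simp
    ultimately show "y \<in> (\<lambda>i. (g^^i) x) ` {..<n}" by force
  qed
qed

lemma finite_component_periodic:
  assumes "inj g" "finite (component g x)"
  shows "\<exists>n>0. (g^^n) x = x"
proof -
  have "range (\<lambda>i. (g^^i) x) \<subseteq> component g x"
    unfolding component_def by (auto simp: linked_funpow)
  then have "finite (range (\<lambda>i. (g^^i) x))" using assms(2) finite_subset by blast
  then have "\<not> inj (\<lambda>i. (g^^i) x)" using finite_imageD by blast
  then obtain i j where ij: "(g^^i) x = (g^^j) x" "i < j"
    unfolding inj_def by (metis linorder_neqE_nat)
  then have "(g^^i) x = (g^^i) ((g^^(j - i)) x)"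
    using funpow_add_apply[where m = i and n = "j - i" and x = x] by simp
  then have "(g^^(j - i)) x = x" by (rule funpow_cancel[OF assms(1), symmetric])
  then show ?thesis using ij(2) zero_less_diff by blast
qed

lemma funpow_pos_in_range:
  fixes g :: "'a \<Rightarrow> 'a"
  assumes "0 < k"
  shows "(g^^k) x \<in> range g"
proof -
  obtain i where "k = Suc i" using assms by (cases k) auto
  then have "(g^^k) x = g ((g^^i) x)" by simp
  then show ?thesis by simp
qed

section \<open>The effect of a transposition\<close>

text \<open>A short name for transpositions; the plain name transpose denotes a list function.\<close>

abbreviation tr :: "'a \<Rightarrow> 'a \<Rightarrow> 'a \<Rightarrow> 'a" where
  "tr \<equiv> Transposition.transpose"

lemma inj_tr_comp: "inj g \<Longrightarrow> inj (tr a b \<circ> g)"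
  by (simp add: inj_compose inj_transpose)

lemma tr_tr_comp: "tr a b \<circ> (tr a b \<circ> g) = g"
  by (simp add: fun_eq_iff)

lemma first_visit:
  fixes g :: "'a \<Rightarrow> 'a"
  assumes "0 < k" "(g^^k) a \<in> V"
  obtains k where "0 < k" "(g^^k) a \<in> V" "\<And>j. 0 < j \<Longrightarrow> j < k \<Longrightarrow> (g^^j) a \<notin> V"
proof -
  define k0 where "k0 = (LEAST k. 0 < k \<and> (g^^k) a \<in> V)"
  have "0 < k0 \<and> (g^^k0) a \<in> V"
    unfolding k0_def using LeastI[of "\<lambda>k. 0 < k \<and> (g^^k) a \<in> V"] assms by blast
  moreover have "(g^^j) a \<notin> V" if "0 < j" "j < k0" for j
    using not_less_Least[of j "\<lambda>k. 0 < k \<and> (g^^k) a \<in> V"] that unfolding k0_def by blast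
  ultimately show ?thesis using that by blast
qed

lemma swap_orbit_prefix:
  assumes avoid: "\<And>j. 0 < j \<Longrightarrow> j < k \<Longrightarrow> (g^^j) a \<notin> {a, b}" and "j < k"
  shows "((tr a b \<circ> g)^^j) a = (g^^j) a"
  using \<open>j < k\<close>
proof (induction j)
  case (Suc j)
  then have "(g^^Suc j) a \<notin> {a, b}" using avoid by blast
  then show ?case using Suc by simp
qed simp

lemma swap_orbit_at_visit:
  assumes "\<And>j. 0 < j \<Longrightarrow> j < k \<Longrightarrow> (g^^j) a \<notin> {a, b}" and "0 < k"
  shows "((tr a b \<circ> g)^^k) a = tr a b ((g^^k) a)"
proof -
  obtain i where k: "k = Suc i" using \<open>0 < k\<close> by (cases k) auto
  have "((tr a b \<circ> g)^^i) a = (g^^i) a" using swap_orbit_prefix[OF assms(1)] k by simp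
  then show ?thesis unfolding k by simp
qed

lemma swap_cuts_cycle:
  assumes "inj g" "a \<noteq> b" "0 < k" "(g^^k) a = b"
    and avoid: "\<And>j. 0 < j \<Longrightarrow> j < k \<Longrightarrow> (g^^j) a \<notin> {a, b}"
  shows "finite (component (tr a b \<circ> g) a)" "b \<notin> component (tr a b \<circ> g) a"
proof -
  have "((tr a b \<circ> g)^^k) a = a" using swap_orbit_at_visit[OF avoid \<open>0 < k\<close>] assms(4) by simp
  then have "component (tr a b \<circ> g) a = (\<lambda>j. ((tr a b \<circ> g)^^j) a) ` {..<k}"
    using periodic_component[OF inj_tr_comp[OF assms(1)] \<open>0 < k\<close>] by simp
  also have "\<dots> = (\<lambda>j. (g^^j) a) ` {..<k}"
    using swap_orbit_prefix[OF avoid] by (intro image_cong) auto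
  finally have C: "component (tr a b \<circ> g) a = (\<lambda>j. (g^^j) a) ` {..<k}" .
  then show "finite (component (tr a b \<circ> g) a)" by simp
  have "(g^^j) a \<noteq> b" if "j < k" for j
    using avoid[of j] that assms(2) by (cases j) auto
  then show "b \<notin> component (tr a b \<circ> g) a" unfolding C by auto
qed

lemma swap_links:
  assumes "0 < k" "(g^^k) a = a" "\<And>j. 0 < j \<Longrightarrow> j < k \<Longrightarrow> (g^^j) a \<notin> {a, b}"
  shows "linked (tr a b \<circ> g) a b"
proof -
  have "((tr a b \<circ> g)^^k) a = ((tr a b \<circ> g)^^0) b"
    using swap_orbit_at_visit[OF assms(3,1)] assms(2) by simp
  then show ?thesis unfolding linked_def by blast
qed

lemma inv_closed_swap_iff:
  assumes "a \<in> T \<longleftrightarrow> b \<in> T"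
  shows "inv_closed (tr a b \<circ> g) T \<longleftrightarrow> inv_closed g T"
proof -
  have "tr a b y \<in> T \<longleftrightarrow> y \<in> T" for y
    using assms by (cases "y = a"; cases "y = b") auto
  then show ?thesis unfolding inv_closed_def by simp
qed

lemma swap_component_union_subset:
  "component (tr a b \<circ> g) a \<union> component (tr a b \<circ> g) b \<subseteq> component g a \<union> component g b"
proof -
  let ?U = "component g a \<union> component g b"
  have "inv_closed g ?U"
    using inv_closed_component[of g a] inv_closed_component[of g b]
    unfolding inv_closed_def by blast
  then have "inv_closed (tr a b \<circ> g) ?U"
    using inv_closed_swap_iff[of a ?U b g] component_self[of a g] component_self[of b g] by blast
  then show ?thesis using component_subset component_self by (metis Un_least Un_iff)
qed

lemma swap_component_union:
  "component (tr a b \<circ> g) a \<union> component (tr a b \<circ> g) b = component g a \<union> component g b"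
  using swap_component_union_subset[of a b g]
    swap_component_union_subset[of a b "tr a b \<circ> g"]
  unfolding tr_tr_comp by (rule subset_antisym)

definition cycles_meeting :: "('a \<Rightarrow> 'a) \<Rightarrow> 'a set \<Rightarrow> ('a set \<Rightarrow> bool) \<Rightarrow> 'a set set" where
  "cycles_meeting g F Q = {S. is_cycle g S \<and> Q S \<and> S \<inter> F \<noteq> {}}"

definition cycles_avoiding :: "('a \<Rightarrow> 'a) \<Rightarrow> 'a set \<Rightarrow> ('a set \<Rightarrow> bool) \<Rightarrow> 'a set set" where
  "cycles_avoiding g F Q = {S. is_cycle g S \<and> Q S \<and> S \<inter> F = {}}"

lemma cycles_meeting_pair:
  "cycles_meeting g {a, b} Q = {S \<in> {component g a, component g b}. Q S}"
proof (rule set_eqI)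
  fix S
  have "is_cycle g S \<and> S \<inter> {a, b} \<noteq> {} \<longleftrightarrow> S = component g a \<or> S = component g b"
    using cycle_eq_component[of g S] is_cycle_component[of g] component_self[of _ g] by auto
  then show "S \<in> cycles_meeting g {a, b} Q \<longleftrightarrow> S \<in> {S \<in> {component g a, component g b}. Q S}"
    unfolding cycles_meeting_def by auto
qed

lemma finite_cycles_meeting: "finite (cycles_meeting g {a, b} Q)"
  unfolding cycles_meeting_pair by simp

text \<open>Splitting: a and b in one cycle of g.  The cycle of a under the swap is finite and
  misses b, and together with the cycle of b it fills the old cycle.\<close>

lemma swap_splits_oriented:
  assumes "inj g" "a \<noteq> b" "(g^^k) a = b"
  shows "card (cycles_meeting (tr a b \<circ> g) {a, b} finite)
           = Suc (card (cycles_meeting g {a, b} finite))"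
    and "card (cycles_meeting (tr a b \<circ> g) {a, b} (\<lambda>S. infinite S))
           = card (cycles_meeting g {a, b} (\<lambda>S. infinite S))"
proof -
  let ?C = "component (tr a b \<circ> g) a" and ?D = "component (tr a b \<circ> g) b"
  have "0 < k" using assms(2,3) by (cases k) auto
  then obtain i where i: "0 < i" "(g^^i) a \<in> {a, b}"
      and avoid: "\<And>j. 0 < j \<Longrightarrow> j < i \<Longrightarrow> (g^^j) a \<notin> {a, b}"
    using first_visit[of k g a "{a, b}"] assms(3) by auto
  have same: "component g b = component g a"
    using component_eq_iff linked_funpow assms(3) by metis
  have "(g^^i) a = b"
  proof (rule ccontr)
    assume "(g^^i) a \<noteq> b"
    then have "(g^^i) a = a" using i by blast
    then have "b \<in> (\<lambda>j. (g^^j) a) ` {..<i}"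
      using periodic_component[OF assms(1) i(1)] same component_self[of b g] by simp
    then obtain j where j: "j < i" "(g^^j) a = b" by auto
    then have "0 < j" using assms(2) by (cases j) auto
    then show False using avoid j by blast
  qed
  note cut = swap_cuts_cycle[OF assms(1,2) i(1) this avoid]
  have CD: "?C \<noteq> ?D" using cut(2) component_self[of b] by metis
  have union: "?C \<union> ?D = component g a"
    using swap_component_union[of a b g] same by simp
  have finD: "finite ?D \<longleftrightarrow> finite (component g a)"
    using union cut(1) by (metis finite_Un)
  have "cycles_meeting (tr a b \<circ> g) {a, b} finite
          = (if finite (component g a) then {?C, ?D} else {?C})"
    and "cycles_meeting g {a, b} finite = (if finite (component g a) then {component g a} else {})"
    and "cycles_meeting (tr a b \<circ> g) {a, b} (\<lambda>S. infinite S)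
          = (if finite (component g a) then {} else {?D})"
    and "cycles_meeting g {a, b} (\<lambda>S. infinite S)
          = (if finite (component g a) then {} else {component g a})"
    unfolding cycles_meeting_pair same using cut(1) finD by auto
  then show "card (cycles_meeting (tr a b \<circ> g) {a, b} finite)
               = Suc (card (cycles_meeting g {a, b} finite))"
    and "card (cycles_meeting (tr a b \<circ> g) {a, b} (\<lambda>S. infinite S))
               = card (cycles_meeting g {a, b} (\<lambda>S. infinite S))"
    using CD by simp_all
qed

lemma swap_splits:
  assumes "inj g" "a \<noteq> b" "linked g a b"
  shows "card (cycles_meeting (tr a b \<circ> g) {a, b} finite)
           = Suc (card (cycles_meeting g {a, b} finite))"
    and "card (cycles_meeting (tr a b \<circ> g) {a, b} (\<lambda>S. infinite S))
           = card (cycles_meeting g {a, b} (\<lambda>S. infinite S))"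
proof -
  obtain k where "(g^^k) a = b \<or> (g^^k) b = a" using linked_inj[OF assms(1,3)] by blast
  then have "card (cycles_meeting (tr a b \<circ> g) {a, b} finite)
               = Suc (card (cycles_meeting g {a, b} finite)) \<and>
             card (cycles_meeting (tr a b \<circ> g) {a, b} (\<lambda>S. infinite S))
               = card (cycles_meeting g {a, b} (\<lambda>S. infinite S))"
  proof
    assume "(g^^k) b = a"
    from swap_splits_oriented[OF assms(1) assms(2)[symmetric] this] show ?thesis
      by (simp add: insert_commute transpose_commute)
  qed (use swap_splits_oriented[OF assms(1,2)] in blast)
  then show "card (cycles_meeting (tr a b \<circ> g) {a, b} finite)
               = Suc (card (cycles_meeting g {a, b} finite))"
    and "card (cycles_meeting (tr a b \<circ> g) {a, b} (\<lambda>S. infinite S))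
           = card (cycles_meeting g {a, b} (\<lambda>S. infinite S))" by simp_all
qed

lemma swap_merges:
  assumes "inj g" "\<not> linked g a b" "finite (component g a)"
  shows "linked (tr a b \<circ> g) a b"
proof -
  obtain n where "0 < n" "(g^^n) a = a" using finite_component_periodic[OF assms(1,3)] by blast
  then obtain k where k: "0 < k" "(g^^k) a \<in> {a, b}"
      and avoid: "\<And>j. 0 < j \<Longrightarrow> j < k \<Longrightarrow> (g^^j) a \<notin> {a, b}"
    using first_visit[of n g a "{a, b}"] by auto
  have "(g^^k) a \<noteq> b" using assms(2) linked_funpow by metis
  then show ?thesis using swap_links[OF k(1) _ avoid] k(2) by blast
qed

lemma swap_cycle_counts:
  assumes "inj g" "a \<noteq> b"
    and one_finite: "linked g a b \<or> finite (component g a) \<or> finite (component g b)"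
  shows "card (cycles_meeting (tr a b \<circ> g) {a, b} (\<lambda>S. infinite S))
           = card (cycles_meeting g {a, b} (\<lambda>S. infinite S))"
    and "odd (int (card (cycles_meeting (tr a b \<circ> g) {a, b} finite))
              - int (card (cycles_meeting g {a, b} finite)))"
proof -
  let ?g' = "tr a b \<circ> g"
  have "linked ?g' a b" if unlinked: "\<not> linked g a b"
  proof (cases "finite (component g a)")
    case True
    then show ?thesis using swap_merges[OF assms(1) unlinked] by blast
  next
    case False
    then have "linked (tr b a \<circ> g) b a"
      using one_finite unlinked linked_sym swap_merges[OF assms(1)] by metis
    then show ?thesis by (simp add: transpose_commute linked_sym)
  qed
  then have "linked g a b \<or> linked ?g' a b" by blast
  then have "card (cycles_meeting ?g' {a, b} (\<lambda>S. infinite S))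
               = card (cycles_meeting g {a, b} (\<lambda>S. infinite S)) \<and>
             odd (int (card (cycles_meeting ?g' {a, b} finite))
                    - int (card (cycles_meeting g {a, b} finite)))"
  proof
    assume "linked g a b"
    then show ?thesis using swap_splits[OF assms(1,2)] by simp
  next
    assume "linked ?g' a b"
    from swap_splits[OF inj_tr_comp[OF assms(1)] assms(2) this] show ?thesis
      by (simp add: tr_tr_comp)
  qed
  then show "card (cycles_meeting ?g' {a, b} (\<lambda>S. infinite S))
               = card (cycles_meeting g {a, b} (\<lambda>S. infinite S))"
    and "odd (int (card (cycles_meeting ?g' {a, b} finite))
               - int (card (cycles_meeting g {a, b} finite)))" by simp_all
qed

lemma is_cycle_swap_avoiding:
  assumes "a \<notin> S" "b \<notin> S"
  shows "is_cycle (tr a b \<circ> g) S \<longleftrightarrow> is_cycle g S"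
proof -
  have same_closed: "inv_closed (tr a b \<circ> g) T \<longleftrightarrow> inv_closed g T" if "T \<subseteq> S" for T
    using assms that by (intro inv_closed_swap_iff) blast
  have "(\<forall>T. T \<subset> S \<and> T \<noteq> {} \<longrightarrow> \<not> inv_closed (tr a b \<circ> g) T)
          \<longleftrightarrow> (\<forall>T. T \<subset> S \<and> T \<noteq> {} \<longrightarrow> \<not> inv_closed g T)"
    using same_closed by (meson psubset_imp_subset)
  then show ?thesis unfolding is_cycle_def using same_closed[of S] by simp
qed

lemma cycles_avoiding_swap: "cycles_avoiding (tr a b \<circ> g) {a, b} Q = cycles_avoiding g {a, b} Q"
proof -
  have "is_cycle (tr a b \<circ> g) S \<longleftrightarrow> is_cycle g S" if "S \<inter> {a, b} = {}" for S
    using that is_cycle_swap_avoiding[of a S b g] by blast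
  then show ?thesis unfolding cycles_avoiding_def by blast
qed

lemma ecard_Un: "A \<inter> B = {} \<Longrightarrow> ecard (A \<union> B) = ecard A + ecard B"
  unfolding ecard_def by (auto simp: card_Un_disjoint)

lemma ecard_image: "inj_on f A \<Longrightarrow> ecard (f ` A) = ecard A"
  unfolding ecard_def by (simp add: card_image finite_image_iff)

lemma ecard_cycles_split:
  "ecard {S. is_cycle g S \<and> Q S}
     = ecard (cycles_avoiding g {a, b} Q) + enat (card (cycles_meeting g {a, b} Q))"
proof -
  have "{S. is_cycle g S \<and> Q S} = cycles_avoiding g {a, b} Q \<union> cycles_meeting g {a, b} Q"
    and "cycles_avoiding g {a, b} Q \<inter> cycles_meeting g {a, b} Q = {}"
    unfolding cycles_avoiding_def cycles_meeting_def by blast+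
  then have "ecard {S. is_cycle g S \<and> Q S}
               = ecard (cycles_avoiding g {a, b} Q) + ecard (cycles_meeting g {a, b} Q)"
    by (simp add: ecard_Un)
  moreover have "ecard (cycles_meeting g {a, b} Q) = enat (card (cycles_meeting g {a, b} Q))"
    by (simp add: ecard_def finite_cycles_meeting)
  ultimately show ?thesis by simp
qed

section \<open>Forward and infinite cycles\<close>

text \<open>A point outside the range of an injective map is not periodic, so its cycle is
  infinite, hence a forward cycle.\<close>

lemma outside_range_infinite_component:
  assumes "inj g" "x \<notin> range g"
  shows "infinite (component g x)"
proof
  assume "finite (component g x)"
  then obtain n where "0 < n" "(g^^n) x = x" using finite_component_periodic[OF assms(1)] by blast
  then have "x \<in> range g" using funpow_pos_in_range[of n g x] by simp
  then show False using assms(2) by simp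
qed

text \<open>Each forward cycle contains exactly one point outside the range.\<close>

lemma Cfwd_eq_non_range:
  assumes "inj g"
  shows "Cfwd g = ecard (- range g)"
proof -
  have "{S. fwd_cycle g S} = component g ` (- range g)"
  proof (rule set_eqI)
    fix S
    show "S \<in> {S. fwd_cycle g S} \<longleftrightarrow> S \<in> component g ` (- range g)"
    proof
      assume "S \<in> {S. fwd_cycle g S}"
      then obtain x where "is_cycle g S" "x \<in> S" "x \<notin> range g" unfolding fwd_cycle_def by auto
      then have "x \<in> - range g" "S = component g x" using cycle_eq_component by simp_all
      then show "S \<in> component g ` (- range g)" by (rule rev_image_eqI)
    next
      assume "S \<in> component g ` (- range g)"
      then obtain x where x: "x \<notin> range g" and S: "S = component g x" by blast
      have "x \<in> S - range g" using x component_self[of x g] S by simp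
      then show "S \<in> {S. fwd_cycle g S}"
        unfolding fwd_cycle_def S
        using is_cycle_component[of g x] outside_range_infinite_component[OF assms x] by auto
    qed
  qed
  moreover have "inj_on (component g) (- range g)"
  proof (rule inj_onI)
    fix x y
    assume x: "x \<in> - range g" and y: "y \<in> - range g" and "component g x = component g y"
    then have "linked g x y" by (simp add: component_eq_iff)
    then obtain k where k: "(g^^k) x = y \<or> (g^^k) y = x" using linked_inj[OF assms] by blast
    show "x = y"
    proof (cases "k = 0")
      case False
      then show ?thesis using k x y funpow_pos_in_range[of k g] by auto
    qed (use k in auto)
  qed
  ultimately show ?thesis unfolding Cfwd_def by (simp add: ecard_image)
qed

text \<open>Hence a swap does not change the number of forward cycles: it permutes the
  complement of the range.\<close>

lemma Cfwd_swap:
  assumes "inj g"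
  shows "Cfwd (tr a b \<circ> g) = Cfwd g"
proof -
  have "- range (tr a b \<circ> g) = tr a b ` (- range g)"
    using bij_image_Compl_eq[OF bij_transpose, of a b "range g"] by (simp add: image_comp)
  then have "Cfwd (tr a b \<circ> g) = ecard (tr a b ` (- range g))"
    using Cfwd_eq_non_range[OF inj_tr_comp[OF assms]] by simp
  also have "\<dots> = ecard (- range g)" by (simp add: ecard_image)
  also have "\<dots> = Cfwd g" using Cfwd_eq_non_range[OF assms] by simp
  finally show ?thesis .
qed

lemma Copen_plus_Cfwd: "Copen g + Cfwd g = ecard {S. is_cycle g S \<and> infinite S}"
proof -
  have "{S. is_cycle g S \<and> infinite S} = {S. open_cycle g S} \<union> {S. fwd_cycle g S}"
    and "{S. open_cycle g S} \<inter> {S. fwd_cycle g S} = {}"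
    unfolding open_cycle_def fwd_cycle_def by blast+
  then show ?thesis unfolding Copen_def Cfwd_def by (simp add: ecard_Un)
qed

lemma single_infinite_cycle_linked:
  assumes "ecard {S. is_cycle g S \<and> infinite S} \<le> 1"
    and "infinite (component g a)" "infinite (component g b)"
  shows "linked g a b"
proof -
  let ?I = "{S. is_cycle g S \<and> infinite S}"
  have fin: "finite ?I" using assms(1) unfolding ecard_def by (auto split: if_splits)
  then have "card ?I \<le> Suc 0" using assms(1) unfolding ecard_def by (simp add: one_enat_def)
  moreover have "component g a \<in> ?I" "component g b \<in> ?I"
    using assms(2,3) is_cycle_component by auto
  ultimately have "component g a = component g b" using card_le_Suc0_iff_eq[OF fin] by blast
  then show ?thesis by (simp add: component_eq_iff)
qed

section \<open>Signed differences of finite cycle counts\<close>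

definition count_diff :: "('a \<Rightarrow> 'a) \<Rightarrow> ('a \<Rightarrow> 'a) \<Rightarrow> int" where
  "count_diff f g = (\<Sum>n\<in>{n. n > 0 \<and> Cn f n \<noteq> Cn g n}.
                       int (the_enat (Cn f n)) - int (the_enat (Cn g n)))"

text \<open>The signed sum may be taken over any finite set of positive lengths containing the
  lengths where the counts differ; this makes it additive along chains.\<close>

lemma count_diff_over:
  assumes "finite N" "{n. n > 0 \<and> Cn f n \<noteq> Cn g n} \<subseteq> N" "\<And>n. n \<in> N \<Longrightarrow> 0 < n"
  shows "count_diff f g = (\<Sum>n\<in>N. int (the_enat (Cn f n)) - int (the_enat (Cn g n)))"
  unfolding count_diff_def using assms by (intro sum.mono_neutral_left) auto

lemma count_diff_trans:
  assumes "finite {n. n > 0 \<and> Cn f n \<noteq> Cn g n}" "finite {n. n > 0 \<and> Cn g n \<noteq> Cn k n}"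
  shows "finite {n. n > 0 \<and> Cn f n \<noteq> Cn k n}"
    and "count_diff f k = count_diff f g + count_diff g k"
proof -
  define N where "N = {n. n > 0 \<and> Cn f n \<noteq> Cn g n} \<union> {n. n > 0 \<and> Cn g n \<noteq> Cn k n}"
  have N: "finite N" "\<And>n. n \<in> N \<Longrightarrow> 0 < n" unfolding N_def using assms by auto
  have sub: "{n. n > 0 \<and> Cn f n \<noteq> Cn k n} \<subseteq> N" unfolding N_def by auto
  then show "finite {n. n > 0 \<and> Cn f n \<noteq> Cn k n}" using N(1) finite_subset by blast
  have fg: "{n. n > 0 \<and> Cn f n \<noteq> Cn g n} \<subseteq> N" and gk: "{n. n > 0 \<and> Cn g n \<noteq> Cn k n} \<subseteq> N"
    unfolding N_def by auto
  have "count_diff f k = (\<Sum>n\<in>N. (int (the_enat (Cn f n)) - int (the_enat (Cn g n)))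
                                + (int (the_enat (Cn g n)) - int (the_enat (Cn k n))))"
    using count_diff_over[OF N(1) sub N(2)] by simp
  also have "\<dots> = count_diff f g + count_diff g k"
    by (simp only: sum.distrib count_diff_over[OF N(1) fg N(2)] count_diff_over[OF N(1) gk N(2)])
  finally show "count_diff f k = count_diff f g + count_diff g k" .
qed

lemma card_by_size:
  assumes "finite M" "finite N" "card ` M \<subseteq> N"
  shows "(\<Sum>n\<in>N. card {S\<in>M. card S = n}) = card M"
  using sum.group[OF assms, of "\<lambda>_. 1::nat"] by simp

lemma count_diff_local:
  assumes finM: "finite M1" "finite M2" and pos: "\<And>S. S \<in> M1 \<union> M2 \<Longrightarrow> 0 < card S"
    and finA: "\<And>n. 0 < n \<Longrightarrow> A n \<noteq> \<infinity>"
    and Cf: "\<And>n. Cn f n = A n + enat (card {S\<in>M1. card S = n})"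
    and Cg: "\<And>n. Cn g n = A n + enat (card {S\<in>M2. card S = n})"
  shows "finite {n. n > 0 \<and> Cn f n \<noteq> Cn g n}"
    and "count_diff f g = int (card M1) - int (card M2)"
proof -
  define N where "N = card ` (M1 \<union> M2)"
  have N: "finite N" "\<And>n. n \<in> N \<Longrightarrow> 0 < n" unfolding N_def using finM pos by auto
  have "Cn f n = Cn g n" if "n \<notin> N" for n
  proof -
    have "{S\<in>M1. card S = n} = {}" "{S\<in>M2. card S = n} = {}"
      using that unfolding N_def by blast+
    then show ?thesis using Cf[of n] Cg[of n] by (simp only: card.empty)
  qed
  then have sub: "{n. n > 0 \<and> Cn f n \<noteq> Cn g n} \<subseteq> N" by blast
  then show "finite {n. n > 0 \<and> Cn f n \<noteq> Cn g n}" using N(1) finite_subset by blast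
  have "count_diff f g = (\<Sum>n\<in>N. int (the_enat (Cn f n)) - int (the_enat (Cn g n)))"
    by (rule count_diff_over[OF N(1) sub N(2)])
  also have "\<dots> = (\<Sum>n\<in>N. int (card {S\<in>M1. card S = n}) - int (card {S\<in>M2. card S = n}))"
  proof (rule sum.cong[OF refl])
    fix n
    assume "n \<in> N"
    then obtain v where "A n = enat v" using finA[OF N(2)[of n]] by (cases "A n") auto
    then show "int (the_enat (Cn f n)) - int (the_enat (Cn g n))
                 = int (card {S\<in>M1. card S = n}) - int (card {S\<in>M2. card S = n})"
      using Cf[of n] Cg[of n] by simp
  qed
  also have "\<dots> = int (card M1) - int (card M2)"
  proof -
    have "card ` M1 \<subseteq> N" "card ` M2 \<subseteq> N" unfolding N_def by auto
    then show ?thesis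
      using card_by_size[OF finM(1) N(1)] card_by_size[OF finM(2) N(1)]
      by (simp add: sum_subtractf flip: of_nat_sum)
  qed
  finally show "count_diff f g = int (card M1) - int (card M2)" .
qed

lemma Cn_split:
  "Cn g n = ecard (cycles_avoiding g {a, b} (\<lambda>S. finite S \<and> card S = n))
            + enat (card {S \<in> cycles_meeting g {a, b} finite. card S = n})"
proof -
  have "cycles_meeting g {a, b} (\<lambda>S. finite S \<and> card S = n)
          = {S \<in> cycles_meeting g {a, b} finite. card S = n}"
    unfolding cycles_meeting_def by auto
  then show ?thesis unfolding Cn_def by (simp add: ecard_cycles_split[of _ _ a b])
qed

text \<open>Under a swap, the counts of finite cycles change only through the cycles meeting
  {a, b}; so the signed total change is that of the number of finite cycles meeting {a, b}.\<close>

lemma swap_count_diff: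
  assumes fin: "\<forall>n>0. Cn g n < \<infinity>"
  shows "\<forall>n>0. Cn (tr a b \<circ> g) n < \<infinity>"
    and "finite {n. n > 0 \<and> Cn (tr a b \<circ> g) n \<noteq> Cn g n}"
    and "count_diff (tr a b \<circ> g) g = int (card (cycles_meeting (tr a b \<circ> g) {a, b} finite))
                                       - int (card (cycles_meeting g {a, b} finite))"
proof -
  let ?g' = "tr a b \<circ> g"
  define A where "A n = ecard (cycles_avoiding g {a, b} (\<lambda>S. finite S \<and> card S = n))" for n
  have Cg: "Cn g n = A n + enat (card {S \<in> cycles_meeting g {a, b} finite. card S = n})" for n
    unfolding A_def by (rule Cn_split)
  have Cg': "Cn ?g' n = A n + enat (card {S \<in> cycles_meeting ?g' {a, b} finite. card S = n})" for n
    unfolding A_def using Cn_split[of ?g' n a b] by (simp add: cycles_avoiding_swap)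
  have finA: "A n \<noteq> \<infinity>" if "n > 0" for n
  proof
    assume "A n = \<infinity>"
    then have "Cn g n = \<infinity>" using Cg[of n] by simp
    then show False using fin[rule_format, OF that] by simp
  qed
  show "\<forall>n>0. Cn ?g' n < \<infinity>"
  proof (intro allI impI)
    fix n :: nat
    assume "n > 0"
    then obtain v where "A n = enat v" using finA[of n] by (cases "A n") auto
    then show "Cn ?g' n < \<infinity>" using Cg'[of n] by simp
  qed
  have pos: "0 < card S"
    if "S \<in> cycles_meeting ?g' {a, b} finite \<union> cycles_meeting g {a, b} finite" for S
    using that unfolding cycles_meeting_def is_cycle_def by (auto simp: card_gt_0_iff)
  show "finite {n. n > 0 \<and> Cn ?g' n \<noteq> Cn g n}"
    and "count_diff ?g' g = int (card (cycles_meeting ?g' {a, b} finite))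
                            - int (card (cycles_meeting g {a, b} finite))"
    using count_diff_local[OF finite_cycles_meeting finite_cycles_meeting pos finA Cg' Cg] by blast+
qed

section \<open>Composing with transpositions on the left\<close>

text \<open>The hypotheses of the theorem on f, preserved under composition with transpositions.\<close>

definition admissible :: "('a \<Rightarrow> 'a) \<Rightarrow> bool" where
  "admissible g \<longleftrightarrow> inj g \<and> Copen g + Cfwd g = 1 \<and> (\<forall>n>0. Cn g n < \<infinity>)"

lemma swap_step:
  assumes adm: "admissible g" and "a \<noteq> b"
  shows "admissible (tr a b \<circ> g) \<and> Copen (tr a b \<circ> g) = Copen g \<and> Cfwd (tr a b \<circ> g) = Cfwd g
    \<and> finite {n. n > 0 \<and> Cn (tr a b \<circ> g) n \<noteq> Cn g n} \<and> odd (count_diff (tr a b \<circ> g) g)"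
proof -
  let ?g' = "tr a b \<circ> g"
  have inj: "inj g" and one: "Copen g + Cfwd g = 1" and fin: "\<forall>n>0. Cn g n < \<infinity>"
    using adm unfolding admissible_def by auto
  have "linked g a b \<or> finite (component g a) \<or> finite (component g b)"
    using single_infinite_cycle_linked[of g a b] one Copen_plus_Cfwd[of g] by auto
  note counts = swap_cycle_counts[OF inj \<open>a \<noteq> b\<close> this]
  have "Copen ?g' + Cfwd ?g' = Copen g + Cfwd g"
    unfolding Copen_plus_Cfwd ecard_cycles_split[of _ _ a b] cycles_avoiding_swap counts(1) ..
  moreover have fwd: "Cfwd ?g' = Cfwd g" using Cfwd_swap[OF inj] .
  moreover have "Cfwd g \<noteq> \<infinity>"
  proof
    assume "Cfwd g = \<infinity>"
    then have "Copen g + Cfwd g = \<infinity>" by simp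
    then show False using one by simp
  qed
  ultimately have "Copen ?g' = Copen g" using one by (metis add.commute enat_add_left_cancel)
  then show ?thesis
    using swap_count_diff[OF fin, of a b] counts(2) fwd one inj_tr_comp[OF inj]
    unfolding admissible_def by simp
qed

lemma swapidseq_left:
  assumes "admissible f"
  shows "swapidseq m h \<Longrightarrow> admissible (h \<circ> f) \<and> Copen (h \<circ> f) = Copen f \<and> Cfwd (h \<circ> f) = Cfwd f
    \<and> finite {n. n > 0 \<and> Cn (h \<circ> f) n \<noteq> Cn f n} \<and> (even (count_diff (h \<circ> f) f) \<longleftrightarrow> even m)"
proof (induction rule: swapidseq.induct)
  case id
  then show ?case using assms by (simp add: count_diff_def)
next
  case (comp_Suc m p a b)
  let ?g = "p \<circ> f" and ?g' = "tr a b \<circ> (p \<circ> f)"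
  have adm: "admissible ?g" and open_eq: "Copen ?g = Copen f" and fwd_eq: "Cfwd ?g = Cfwd f"
    and fin: "finite {n. n > 0 \<and> Cn ?g n \<noteq> Cn f n}"
    and parity: "even (count_diff ?g f) \<longleftrightarrow> even m"
    using comp_Suc.IH by blast+
  note step = swap_step[OF adm comp_Suc.hyps(2)]
  have "finite {n. n > 0 \<and> Cn ?g' n \<noteq> Cn f n}"
    and sum: "count_diff ?g' f = count_diff ?g' ?g + count_diff ?g f"
    using count_diff_trans[of ?g' ?g f] step fin by blast+
  moreover have "even (count_diff ?g' f) \<longleftrightarrow> even (Suc m)"
    unfolding sum using step parity by simp
  moreover have "Copen ?g' = Copen f" and "Cfwd ?g' = Cfwd f" using step open_eq fwd_eq by simp_all
  ultimately show ?case unfolding comp_assoc using step by blast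
qed

lemma approx_even_swapidseq:
  assumes "admissible f" "swapidseq m h" "even m"
  shows "approx_even (h \<circ> f) f"
  using swapidseq_left[OF assms(1,2)] assms(1,3)
  unfolding approx_even_def approx_fin_def admissible_def count_diff_def by auto

section \<open>Composing with transpositions on the right\<close>

text \<open>A transposition applied before an injective f equals the transposition of the image
  points applied after f; hence f \<circ> h = h' \<circ> f for a product h' of equally many
  transpositions.\<close>

lemma comp_transpose_inj: "inj f \<Longrightarrow> f \<circ> tr a b = tr (f a) (f b) \<circ> f"
  by (simp add: fun_eq_iff transpose_def inj_eq)

lemma swapidseq_right_to_left:
  assumes "inj f"
  shows "swapidseq m h \<Longrightarrow> \<exists>h'. swapidseq m h' \<and> f \<circ> h = h' \<circ> f"
proof (induction rule: swapidseq.induct)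
  case (comp_Suc m p a b)
  then obtain p' where p': "swapidseq m p'" "f \<circ> p = p' \<circ> f" by blast
  have "f a \<noteq> f b" using comp_Suc.hyps(2) assms by (simp add: inj_eq)
  with p'(1) have "swapidseq (Suc m) (tr (f a) (f b) \<circ> p')" by (rule swapidseq.comp_Suc)
  moreover have "f \<circ> (tr a b \<circ> p) = (tr (f a) (f b) \<circ> p') \<circ> f"
    using comp_transpose_inj[OF assms] p'(2) by (metis comp_assoc)
  ultimately show ?case by blast
qed auto

lemma approx_even_sym: "approx_even f g \<longleftrightarrow> approx_even g f"
proof -
  have set: "{n. n > 0 \<and> Cn f n \<noteq> Cn g n} = {n. n > 0 \<and> Cn g n \<noteq> Cn f n}" by auto
  have "(\<Sum>n\<in>{n. n > 0 \<and> Cn f n \<noteq> Cn g n}. int (the_enat (Cn f n)) - int (the_enat (Cn g n)))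
        = - (\<Sum>n\<in>{n. n > 0 \<and> Cn g n \<noteq> Cn f n}. int (the_enat (Cn g n)) - int (the_enat (Cn f n)))"
    unfolding set by (simp add: sum_negf[symmetric])
  then show ?thesis unfolding approx_even_def approx_fin_def set by auto
qed

theorem mainTheorem17:
  fixes f h :: "'a \<Rightarrow> 'a"
  assumes "countable (UNIV :: 'a set)" and "infinite (UNIV :: 'a set)"
    and "inj f"
    and "Copen f + Cfwd f = 1"
    and "\<forall>n>0. Cn f n < \<infinity>"
    and "permutation h" and "evenperm h"
  shows "approx_even (h \<circ> f) f \<and> approx_even f (f \<circ> h)"
proof -
  have adm: "admissible f" using assms(3-5) unfolding admissible_def by simp
  obtain m where seq: "swapidseq m h" using assms(6) unfolding permutation_def by blast
  have even: "even m" using evenperm_unique[OF seq refl] assms(7) by simp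
  obtain h' where "swapidseq m h'" and "f \<circ> h = h' \<circ> f"
    using swapidseq_right_to_left[OF assms(3) seq] by blast
  then have "approx_even (f \<circ> h) f" using approx_even_swapidseq[OF adm _ even] by simp
  then show ?thesis using approx_even_swapidseq[OF adm seq even] approx_even_sym by blast
qed

end
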